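(* Let $P$ be a 6-stack and let $Q\subseteq P$ be a subset which, with the induced order, is isomorphic to a tower of sections. If $i\ge0$ is an integer with $P(i)\subseteq Q$ but $P(i+1)\not\subseteq Q$, then $P(i+1)\cap Q=\emptyset$.
   Context: All posets are finite. For a poset $P$ and $p\in P$, the rank $r(p)$ of $p$ is the largest $m$ such that there is a chain $p_0<\dots<p_m=p$ in $P$. $P$ is ranked of rank $r(P)$ if every maximal chain has exactly $r(P)+1$ elements. For $0\le i\le j$, $P(i,j)=\{p\in P:i\le r(p)\le j\}$, $P(i)=P(i,i)$ (induced order). The 6-crown $C_6$ is the poset on $\{x_0,x_1,x_2,y_0,y_1,y_2\}$ whose only strict comparabilities are $x_0<y_0>x_1<y_1>x_2<y_2>x_0$. A 6-stack is a ranked poset $P$ of rank $n\ge1$ such that $P(i,i+1)\cong C_6$ for each $0\le i<n$. The ordinal sum of posets $P_1,\dots,P_k$ ($k\ge1$) is their disjoint union ordered by the orders of the $P_i$ together with $p<q$ whenever $p\in P_i,q\in P_j,i<j$. A section is either a two-element antichain or a poset on the set $\{[i,k]: 0\le i\le 2,\ 0\le k\le n\}$ (with $3(n+1)$ distinct elements), for some $n\ge 1$, such that: (1) $[i,k]<[i,l]$ whenever $0\le k<l\le n$; (2) for each $k$, $\{[0,k],[1,k],[2,k]\}$ is an antichain; (3) $[i,k]<[j,l]$ implies $[i+1,k]<[j+1,l]$ (first indices mod $3$); (4) for each $0\le k<n$ there are $i,j$ with $[i,k]\not<[j,k+1]$. A tower of sections is an ordinal sum of one or more sections. *)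

theory Defs
  imports Main
begin

definition poset :: "'a set \<Rightarrow> ('a \<times> 'a) set \<Rightarrow> bool" where
  "poset P r \<longleftrightarrow> finite P \<and> partial_order_on P r"

definition less_in :: "('a \<times> 'a) set \<Rightarrow> 'a \<Rightarrow> 'a \<Rightarrow> bool" where
  "less_in r x y \<longleftrightarrow> (x, y) \<in> r \<and> x \<noteq> y"

definition induced :: "('a \<times> 'a) set \<Rightarrow> 'a set \<Rightarrow> ('a \<times> 'a) set" where
  "induced r A = r \<inter> (A \<times> A)"

definition chain_list :: "'a set \<Rightarrow> ('a \<times> 'a) set \<Rightarrow> 'a list \<Rightarrow> bool" where
  "chain_list P r xs \<longleftrightarrow> set xs \<subseteq> P \<and> sorted_wrt (less_in r) xs"

definition rank :: "'a set \<Rightarrow> ('a \<times> 'a) set \<Rightarrow> 'a \<Rightarrow> nat" where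
  "rank P r p = Max {length xs - 1 | xs. chain_list P r xs \<and> xs \<noteq> [] \<and> last xs = p}"

definition is_chain :: "'a set \<Rightarrow> ('a \<times> 'a) set \<Rightarrow> 'a set \<Rightarrow> bool" where
  "is_chain P r C \<longleftrightarrow> C \<subseteq> P \<and> (\<forall>x\<in>C. \<forall>y\<in>C. (x, y) \<in> r \<or> (y, x) \<in> r)"

definition maximal_chain :: "'a set \<Rightarrow> ('a \<times> 'a) set \<Rightarrow> 'a set \<Rightarrow> bool" where
  "maximal_chain P r C \<longleftrightarrow> is_chain P r C \<and> (\<forall>D. is_chain P r D \<and> C \<subseteq> D \<longrightarrow> D = C)"

definition ranked_of_rank :: "'a set \<Rightarrow> ('a \<times> 'a) set \<Rightarrow> nat \<Rightarrow> bool" where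
  "ranked_of_rank P r n \<longleftrightarrow> (\<forall>C. maximal_chain P r C \<longrightarrow> card C = n + 1)"

(* P(i,j) as a set; its order is the induced one *)
definition levels :: "'a set \<Rightarrow> ('a \<times> 'a) set \<Rightarrow> nat \<Rightarrow> nat \<Rightarrow> 'a set" where
  "levels P r i j = {p \<in> P. i \<le> rank P r p \<and> rank P r p \<le> j}"

definition poset_iso :: "'a set \<Rightarrow> ('a \<times> 'a) set \<Rightarrow> 'b set \<Rightarrow> ('b \<times> 'b) set \<Rightarrow> bool" where
  "poset_iso A r B s \<longleftrightarrow> (\<exists>f. bij_betw f A B \<and> (\<forall>x\<in>A. \<forall>y\<in>A. (x, y) \<in> r \<longleftrightarrow> (f x, f y) \<in> s))"

(* the 6-crown: x_i = i, y_i = 3 + i *)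
definition crown6_carrier :: "nat set" where
  "crown6_carrier = {0..5}"

definition crown6_rel :: "(nat \<times> nat) set" where
  "crown6_rel = Id_on crown6_carrier \<union> {(0,3), (1,3), (1,4), (2,4), (2,5), (0,5)}"

definition six_stack :: "'a set \<Rightarrow> ('a \<times> 'a) set \<Rightarrow> bool" where
  "six_stack P r \<longleftrightarrow> poset P r \<and>
     (\<exists>n\<ge>1. ranked_of_rank P r n \<and>
        (\<forall>i<n. poset_iso (levels P r i (i+1)) (induced r (levels P r i (i+1)))
                         crown6_carrier crown6_rel))"

(* A section, represented concretely on nat \<times> nat; [i,k] is the pair (i,k). *)
definition is_section :: "(nat \<times> nat) set \<Rightarrow> ((nat \<times> nat) \<times> (nat \<times> nat)) set \<Rightarrow> bool" where
  "is_section A s \<longleftrightarrow> partial_order_on A s \<and>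
    ((card A = 2 \<and> (\<forall>x\<in>A. \<forall>y\<in>A. (x, y) \<in> s \<longrightarrow> x = y))
     \<or> (\<exists>n\<ge>1. A = {0..2} \<times> {0..n}
         \<and> (\<forall>i\<le>2. \<forall>k l. k < l \<and> l \<le> n \<longrightarrow> less_in s (i,k) (i,l))
         \<and> (\<forall>k\<le>n. \<forall>i\<le>2. \<forall>j\<le>2. i \<noteq> j \<longrightarrow> ((i,k),(j,k)) \<notin> s)
         \<and> (\<forall>i\<le>2. \<forall>j\<le>2. \<forall>k\<le>n. \<forall>l\<le>n. less_in s (i,k) (j,l)
               \<longrightarrow> less_in s ((i+1) mod 3, k) ((j+1) mod 3, l))
         \<and> (\<forall>k<n. \<exists>i\<le>2. \<exists>j\<le>2. \<not> less_in s (i,k) (j,k+1))))"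

definition osum_carrier :: "('b set \<times> ('b \<times> 'b) set) list \<Rightarrow> (nat \<times> 'b) set" where
  "osum_carrier L = {(j, x). j < length L \<and> x \<in> fst (L ! j)}"

definition osum_rel :: "('b set \<times> ('b \<times> 'b) set) list \<Rightarrow> ((nat \<times> 'b) \<times> (nat \<times> 'b)) set" where
  "osum_rel L = {((j, x), (j', y)). (j, x) \<in> osum_carrier L \<and> (j', y) \<in> osum_carrier L \<and>
                   (j < j' \<or> (j = j' \<and> (x, y) \<in> snd (L ! j)))}"

definition iso_tower_of_sections :: "'a set \<Rightarrow> ('a \<times> 'a) set \<Rightarrow> bool" where
  "iso_tower_of_sections A s \<longleftrightarrow>
     (\<exists>L. L \<noteq> [] \<and> (\<forall>S\<in>set L. is_section (fst S) (snd S)) \<and>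
          poset_iso A s (osum_carrier L) (osum_rel L))"

end

theory Submission
  imports Defs
begin

(* In a 6-stack an element of rank j lies below two of the three elements of
   rank j+1 and an element of rank j+2 lies above two of them, so the two are comparable; hence
   elements whose ranks differ by at least two are comparable.  Of two elements of one rank, at
   least one is comparable with any element of a neighbouring rank.  Together these force every
   3-element antichain of a 6-stack to be a whole level P(j).
   In an ordinal sum, incomparable elements lie in the same summand.  If y lies in P(i+1) and Q,
   some x in P(i) is incomparable with y, and x is incomparable with the other elements of
   P(i), which lie in Q; so the section of y has more than two elements and y lies in one of its
   rows [0,k], [1,k], [2,k].  That row is a 3-antichain in Q through y, hence equals P(i+1), and
   so P(i+1) is contained in Q. *)

definition antichain :: "('a \<times> 'a) set \<Rightarrow> 'a set \<Rightarrow> bool" where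
  "antichain r A \<longleftrightarrow> (\<forall>u\<in>A. \<forall>v\<in>A. (u, v) \<in> r \<longrightarrow> u = v)"

lemma antichain_subset: "antichain r A \<Longrightarrow> B \<subseteq> A \<Longrightarrow> antichain r B"
  unfolding antichain_def by blast

lemma antichain_induced: "A \<subseteq> Q \<Longrightarrow> antichain (induced r Q) A \<longleftrightarrow> antichain r A"
  unfolding antichain_def induced_def by blast

lemma bij_betw_Un_part:
  assumes "bij_betw f (A \<union> B) (C \<union> D)" "f ` A \<subseteq> C" "f ` B \<subseteq> D" "C \<inter> D = {}"
  shows "bij_betw f A C"
proof -
  have "C \<subseteq> f ` A"
  proof
    fix c
    assume "c \<in> C"
    moreover obtain a where "a \<in> A \<union> B" "c = f a"
      using assms(1) \<open>c \<in> C\<close> by (metis UnCI bij_betw_def imageE)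
    ultimately show "c \<in> f ` A"
      using assms(3,4) by blast
  qed
  then show ?thesis
    using assms(1,2) by (auto simp: bij_betw_def intro: inj_on_subset)
qed

locale finite_poset =
  fixes P :: "'a set" and r :: "('a \<times> 'a) set"
  assumes poset: "poset P r"
begin

abbreviation level :: "nat \<Rightarrow> 'a set" where
  "level j \<equiv> levels P r j j"

lemma finite_carrier: "finite P"
  using poset by (simp add: poset_def)

lemma r_refl: "x \<in> P \<Longrightarrow> (x, x) \<in> r"
  using poset by (simp add: poset_def partial_order_on_def preorder_on_def refl_on_def)

lemma r_trans: "(x, y) \<in> r \<Longrightarrow> (y, z) \<in> r \<Longrightarrow> (x, z) \<in> r"
  using poset unfolding poset_def partial_order_on_def preorder_on_def trans_def by blast

lemma r_antisym: "(x, y) \<in> r \<Longrightarrow> (y, x) \<in> r \<Longrightarrow> x = y"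
  using poset unfolding poset_def partial_order_on_def antisym_def by blast

lemma transp_less_in: "transp (less_in r)"
  unfolding transp_def less_in_def using r_trans r_antisym by blast

lemma chain_list_distinct: "chain_list P r xs \<Longrightarrow> distinct xs"
  unfolding chain_list_def distinct_conv_nth sorted_wrt_iff_nth_less less_in_def
  by (metis linorder_neqE_nat)

lemma chain_list_length_le: "chain_list P r xs \<Longrightarrow> length xs \<le> card P"
  using chain_list_distinct finite_carrier by (metis card_mono chain_list_def distinct_card)

lemma finite_chain_lengths: "finite {length xs - 1 | xs. chain_list P r xs \<and> xs \<noteq> [] \<and> last xs = p}"
proof -
  have "{length xs - 1 | xs. chain_list P r xs \<and> xs \<noteq> [] \<and> last xs = p} \<subseteq> {..card P}"
    using chain_list_length_le by fastforce
  then show ?thesis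
    using finite_subset by blast
qed

lemma rank_witness:
  assumes "p \<in> P"
  obtains xs where "chain_list P r xs" "xs \<noteq> []" "last xs = p" "length xs = Suc (rank P r p)"
proof -
  let ?R = "{length xs - 1 | xs. chain_list P r xs \<and> xs \<noteq> [] \<and> last xs = p}"
  have "length [p] - 1 \<in> ?R"
    using assms unfolding chain_list_def by (intro CollectI exI[of _ "[p]"]) simp
  then have "rank P r p \<in> ?R"
    unfolding rank_def using finite_chain_lengths by (intro Max_in) auto
  then obtain xs where "chain_list P r xs" "xs \<noteq> []" "last xs = p" "rank P r p = length xs - 1"
    by blast
  then show ?thesis
    using that by simp
qed

lemma rank_ge_chain:
  assumes "chain_list P r xs" "xs \<noteq> []" "last xs = p"
  shows "length xs \<le> Suc (rank P r p)"
proof -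
  have "length xs - 1 \<le> rank P r p"
    unfolding rank_def using finite_chain_lengths assms by (intro Max_ge) blast+
  then show ?thesis
    by simp
qed

lemma chain_list_snoc:
  assumes "chain_list P r xs" "xs \<noteq> []" "y \<in> P" "less_in r (last xs) y"
  shows "chain_list P r (xs @ [y])"
proof -
  have xs: "xs = butlast xs @ [last xs]"
    using assms(2) by simp
  then have "sorted_wrt (less_in r) (butlast xs @ [last xs])"
    using assms(1) by (simp add: chain_list_def)
  then have "\<forall>u\<in>set (butlast xs). less_in r u (last xs)"
    by (simp add: sorted_wrt_append)
  moreover have "set xs = insert (last xs) (set (butlast xs))"
    using xs by (metis Un_insert_right empty_set list.simps(15) set_append sup_bot.right_neutral)
  ultimately have "\<forall>u\<in>set xs. less_in r u y"
    using assms(4) transp_less_in by (auto dest: transpD)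
  then show ?thesis
    using assms(1,3) by (simp add: chain_list_def sorted_wrt_append)
qed

lemma rank_less:
  assumes "x \<in> P" "y \<in> P" "less_in r x y"
  shows "rank P r x < rank P r y"
proof -
  obtain xs where xs: "chain_list P r xs" "xs \<noteq> []" "last xs = x" "length xs = Suc (rank P r x)"
    using rank_witness[OF assms(1)] by blast
  have "chain_list P r (xs @ [y])"
    using chain_list_snoc xs assms by simp
  then show ?thesis
    using rank_ge_chain[of "xs @ [y]" y] xs by simp
qed

lemma le_rank_le_imp_eq:
  assumes "x \<in> P" "y \<in> P" "(x, y) \<in> r" "rank P r y \<le> rank P r x"
  shows "x = y"
  using rank_less assms unfolding less_in_def by fastforce

lemma rank_Suc_obtain_below:
  assumes "y \<in> P" "rank P r y = Suc m"
  obtains w where "w \<in> P" "less_in r w y" "rank P r w = m"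
proof -
  obtain xs where xs: "chain_list P r xs" "xs \<noteq> []" "last xs = y" "length xs = Suc (Suc m)"
    using rank_witness assms by metis
  define w where "w = last (butlast xs)"
  have split: "xs = butlast xs @ [y]" and ne: "butlast xs \<noteq> []"
    using xs by (auto simp: length_Suc_conv)
  then have sorted: "sorted_wrt (less_in r) (butlast xs @ [y])"
    using xs(1) by (simp add: chain_list_def)
  have chain: "chain_list P r (butlast xs)"
    using xs(1) sorted by (simp add: chain_list_def sorted_wrt_append) (meson in_set_butlastD subset_code(1))
  have w: "w \<in> set (butlast xs)"
    using ne by (simp add: w_def)
  then have "w \<in> P" "less_in r w y"
    using chain sorted by (auto simp: chain_list_def sorted_wrt_append)
  moreover have "Suc m \<le> Suc (rank P r w)"
    using rank_ge_chain[OF chain ne] xs(4) w_def by simp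
  ultimately show ?thesis
    using that rank_less assms by fastforce
qed

lemma chain_extends_to_maximal:
  assumes "is_chain P r C"
  obtains D where "maximal_chain P r D" "C \<subseteq> D"
proof -
  let ?ext = "\<lambda>D. is_chain P r D \<and> C \<subseteq> D"
  have bounded: "\<forall>D. ?ext D \<longrightarrow> card D < Suc (card P)"
    using finite_carrier by (simp add: is_chain_def card_mono le_imp_less_Suc)
  obtain D where D: "?ext D" and greatest: "\<forall>E. ?ext E \<longrightarrow> card E \<le> card D"
    using ex_has_greatest_nat[of ?ext C card, OF _ bounded] assms by auto
  have "E = D" if "is_chain P r E" "D \<subseteq> E" for E
  proof -
    have "finite E"
      using that(1) finite_carrier finite_subset by (auto simp: is_chain_def)
    moreover have "card E \<le> card D"
      using that D greatest by auto
    ultimately show ?thesis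
      using that(2) card_seteq by blast
  qed
  then have "maximal_chain P r D"
    using D by (auto simp: maximal_chain_def)
  then show ?thesis
    using that D by blast
qed

lemma chain_list_is_chain:
  assumes "chain_list P r xs"
  shows "is_chain P r (set xs)"
  unfolding is_chain_def
proof (intro conjI ballI)
  show "set xs \<subseteq> P"
    using assms by (simp add: chain_list_def)
  fix x y
  assume "x \<in> set xs" "y \<in> set xs"
  then obtain a b where ab: "a < length xs" "b < length xs" "x = xs ! a" "y = xs ! b"
    by (metis in_set_conv_nth)
  have "\<forall>a b. a < b \<longrightarrow> b < length xs \<longrightarrow> (xs ! a, xs ! b) \<in> r"
    using assms by (simp add: chain_list_def sorted_wrt_iff_nth_less less_in_def)
  then show "(x, y) \<in> r \<or> (y, x) \<in> r"
    using ab \<open>set xs \<subseteq> P\<close> r_refl by (metis linorder_neqE_nat nth_mem subsetD)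
qed

lemma rank_le_of_ranked:
  assumes "ranked_of_rank P r n" "p \<in> P"
  shows "rank P r p \<le> n"
proof -
  obtain xs where xs: "chain_list P r xs" "length xs = Suc (rank P r p)"
    using rank_witness[OF assms(2)] by metis
  obtain D where D: "maximal_chain P r D" "set xs \<subseteq> D"
    using chain_extends_to_maximal chain_list_is_chain[OF xs(1)] by metis
  have "finite D"
    using D(1) finite_carrier finite_subset by (auto simp: maximal_chain_def is_chain_def)
  then have "card (set xs) \<le> n + 1"
    using D assms(1) card_mono unfolding ranked_of_rank_def by metis
  moreover have "distinct xs"
    using xs(1) by (rule chain_list_distinct)
  ultimately show ?thesis
    using xs(2) distinct_card by fastforce
qed

lemma mem_level_iff: "p \<in> level j \<longleftrightarrow> p \<in> P \<and> rank P r p = j"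
  by (auto simp: levels_def)

lemma levels_Suc_eq_Un: "levels P r j (Suc j) = level j \<union> level (Suc j)"
  by (auto simp: levels_def)

lemma finite_level: "finite (level j)"
  using finite_carrier by (simp add: levels_def)

lemma antichain_level: "antichain r (level j)"
  using le_rank_le_imp_eq by (auto simp: antichain_def mem_level_iff)

end

lemma crown6_rel_strict: "(a, c) \<in> crown6_rel \<Longrightarrow> a \<noteq> c \<Longrightarrow> a \<in> {0, 1, 2} \<and> c \<in> {3, 4, 5}"
  by (auto simp: crown6_rel_def crown6_carrier_def)

lemma crown6_upper_above_some: "c \<in> {3, 4, 5} \<Longrightarrow> \<exists>a\<in>{0, 1, 2}. (a, c) \<in> crown6_rel"
  by (auto simp: crown6_rel_def)

lemma crown6_upper_not_above_all: "c \<in> {3, 4, 5} \<Longrightarrow> \<exists>a\<in>{0, 1, 2}. (a, c) \<notin> crown6_rel"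
  by (auto simp: crown6_rel_def crown6_carrier_def)

lemma crown6_lower_pair_below:
  "a \<in> {0, 1, 2} \<Longrightarrow> b \<in> {0, 1, 2} \<Longrightarrow> a \<noteq> b \<Longrightarrow> c \<in> {3, 4, 5} \<Longrightarrow> (a, c) \<in> crown6_rel \<or> (b, c) \<in> crown6_rel"
  by (auto simp: crown6_rel_def)

lemma crown6_upper_pair_above:
  "a \<in> {0, 1, 2} \<Longrightarrow> c \<in> {3, 4, 5} \<Longrightarrow> d \<in> {3, 4, 5} \<Longrightarrow> c \<noteq> d \<Longrightarrow> (a, c) \<in> crown6_rel \<or> (a, d) \<in> crown6_rel"
  by (auto simp: crown6_rel_def)

lemma crown6_carrier_split: "crown6_carrier = {0, 1, 2} \<union> {3, 4, 5}"
  by (auto simp: crown6_carrier_def)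

locale crown_levels = finite_poset +
  fixes j :: nat and f :: "'a \<Rightarrow> nat"
  assumes bij: "bij_betw f (levels P r j (Suc j)) crown6_carrier"
    and order_iff: "\<And>x y. x \<in> levels P r j (Suc j) \<Longrightarrow> y \<in> levels P r j (Suc j) \<Longrightarrow>
                       (x, y) \<in> r \<longleftrightarrow> (f x, f y) \<in> crown6_rel"
begin

lemma f_inj: "x \<in> levels P r j (Suc j) \<Longrightarrow> y \<in> levels P r j (Suc j) \<Longrightarrow> f x = f y \<Longrightarrow> x = y"
  using bij by (auto simp: bij_betw_def inj_on_def)

lemma f_surj: "c \<in> crown6_carrier \<Longrightarrow> \<exists>p\<in>levels P r j (Suc j). f p = c"
  using bij by (metis bij_betw_def imageE)

lemma f_in_carrier: "p \<in> levels P r j (Suc j) \<Longrightarrow> f p \<in> crown6_carrier"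
  using bij by (auto simp: bij_betw_def)

lemma f_lower: assumes "p \<in> level j" shows "f p \<in> {0, 1, 2}"
proof (rule ccontr)
  assume "f p \<notin> {0, 1, 2}"
  then have "f p \<in> {3, 4, 5}"
    using f_in_carrier assms crown6_carrier_split levels_Suc_eq_Un by blast
  then obtain a where a: "a \<in> {0, 1, 2}" "(a, f p) \<in> crown6_rel"
    using crown6_upper_above_some by blast
  then obtain q where q: "q \<in> levels P r j (Suc j)" "f q = a"
    using f_surj crown6_carrier_split by blast
  have "(q, p) \<in> r" "q \<noteq> p"
    using order_iff q a assms levels_Suc_eq_Un \<open>f p \<in> {3, 4, 5}\<close> by auto
  then have "rank P r q < rank P r p"
    using rank_less q assms by (auto simp: less_in_def levels_def)
  then show False
    using q assms by (auto simp: levels_def)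
qed

lemma f_upper: assumes "p \<in> level (Suc j)" shows "f p \<in> {3, 4, 5}"
proof -
  obtain w where w: "w \<in> P" "less_in r w p" "rank P r w = j"
    using rank_Suc_obtain_below assms by (metis mem_level_iff)
  then have "w \<in> level j"
    by (simp add: mem_level_iff)
  then have "(f w, f p) \<in> crown6_rel" "f w \<noteq> f p"
    using order_iff f_inj w(2) assms levels_Suc_eq_Un by (auto simp: less_in_def)
  then show ?thesis
    using crown6_rel_strict by blast
qed

lemma bij_lower: "bij_betw f (level j) {0, 1, 2}"
  and bij_upper: "bij_betw f (level (Suc j)) {3, 4, 5}"
proof -
  have "bij_betw f (level j \<union> level (Suc j)) ({0, 1, 2} \<union> {3, 4, 5})"
    using bij levels_Suc_eq_Un crown6_carrier_split by simp
  moreover have "f ` level j \<subseteq> {0, 1, 2}" "f ` level (Suc j) \<subseteq> {3, 4, 5}"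
    using f_lower f_upper by (simp_all add: image_subset_iff)
  ultimately show "bij_betw f (level j) {0, 1, 2}" "bij_betw f (level (Suc j)) {3, 4, 5}"
    using bij_betw_Un_part[of f "level j" "level (Suc j)" "{0, 1, 2}" "{3, 4, 5}"]
      bij_betw_Un_part[of f "level (Suc j)" "level j" "{3, 4, 5}" "{0, 1, 2}"]
    by (simp_all add: Un_commute)
qed

lemma card_lower: "card (level j) = 3"
  using bij_betw_same_card[OF bij_lower] by simp

lemma card_upper: "card (level (Suc j)) = 3"
  using bij_betw_same_card[OF bij_upper] by simp

lemma lower_pair_below:
  assumes "x \<in> level j" "x' \<in> level j" "x \<noteq> x'" "z \<in> level (Suc j)"
  shows "(x, z) \<in> r \<or> (x', z) \<in> r"
proof -
  have "f x \<noteq> f x'"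
    using f_inj assms levels_Suc_eq_Un by blast
  then have "(f x, f z) \<in> crown6_rel \<or> (f x', f z) \<in> crown6_rel"
    using assms by (intro crown6_lower_pair_below f_lower f_upper)
  then show ?thesis
    using order_iff assms levels_Suc_eq_Un by blast
qed

lemma upper_pair_above:
  assumes "x \<in> level j" "z \<in> level (Suc j)" "z' \<in> level (Suc j)" "z \<noteq> z'"
  shows "(x, z) \<in> r \<or> (x, z') \<in> r"
proof -
  have "f z \<noteq> f z'"
    using f_inj assms levels_Suc_eq_Un by blast
  then have "(f x, f z) \<in> crown6_rel \<or> (f x, f z') \<in> crown6_rel"
    using assms by (intro crown6_upper_pair_above f_lower f_upper)
  then show ?thesis
    using order_iff assms levels_Suc_eq_Un by blast
qed

lemma upper_not_above_all:
  assumes "z \<in> level (Suc j)"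
  obtains x where "x \<in> level j" "(x, z) \<notin> r"
proof -
  obtain a where a: "a \<in> {0, 1, 2}" "(a, f z) \<notin> crown6_rel"
    using crown6_upper_not_above_all f_upper assms by blast
  then have "a \<in> f ` level j"
    using bij_lower by (simp add: bij_betw_def)
  then obtain x where x: "a = f x" "x \<in> level j"
    by (rule imageE)
  then have "(x, z) \<notin> r"
    using a order_iff assms levels_Suc_eq_Un by auto
  then show ?thesis
    using that x by blast
qed

end

locale six_stack_poset = finite_poset +
  fixes n :: nat
  assumes rank_pos: "1 \<le> n"
    and ranked: "ranked_of_rank P r n"
    and crowns: "\<And>j. j < n \<Longrightarrow> poset_iso (levels P r j (j + 1)) (induced r (levels P r j (j + 1)))
                                     crown6_carrier crown6_rel"
begin

lemma crown_levels_at: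
  assumes "j < n"
  obtains f where "crown_levels P r j f"
proof -
  obtain f where "bij_betw f (levels P r j (Suc j)) crown6_carrier"
    "\<forall>x\<in>levels P r j (Suc j). \<forall>y\<in>levels P r j (Suc j). (x, y) \<in> r \<longleftrightarrow> (f x, f y) \<in> crown6_rel"
    using crowns[OF assms] unfolding poset_iso_def induced_def by auto
  then have "crown_levels P r j f"
    using poset by (simp add: crown_levels_def crown_levels_axioms_def finite_poset_def)
  then show ?thesis
    using that by blast
qed

lemma rank_le: "p \<in> P \<Longrightarrow> rank P r p \<le> n"
  using ranked by (rule rank_le_of_ranked)

lemma crown_levels_below:
  assumes "z \<in> level (Suc j)"
  obtains f where "crown_levels P r j f"
proof -
  have "j < n"
    using assms rank_le by (fastforce simp: mem_level_iff)
  then show ?thesis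
    using that by (rule crown_levels_at)
qed

lemma card_level: assumes "j \<le> n" shows "card (level j) = 3"
proof (cases "j < n")
  case True
  then obtain f where "crown_levels P r j f"
    by (rule crown_levels_at)
  then show ?thesis
    by (rule crown_levels.card_lower)
next
  case False
  then obtain m where m: "j = Suc m" "m < n"
    using assms rank_pos by (cases j) auto
  then obtain f where "crown_levels P r m f"
    by (meson crown_levels_at)
  then show ?thesis
    unfolding m by (rule crown_levels.card_upper)
qed

lemma lower_pair_below:
  assumes "x \<in> level j" "x' \<in> level j" "x \<noteq> x'" "z \<in> level (Suc j)"
  shows "(x, z) \<in> r \<or> (x', z) \<in> r"
proof -
  obtain f where "crown_levels P r j f"
    using assms(4) by (rule crown_levels_below)
  then show ?thesis
    using assms by (rule crown_levels.lower_pair_below)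
qed

lemma upper_pair_above:
  assumes "x \<in> level j" "z \<in> level (Suc j)" "z' \<in> level (Suc j)" "z \<noteq> z'"
  shows "(x, z) \<in> r \<or> (x, z') \<in> r"
proof -
  obtain f where "crown_levels P r j f"
    using assms(2) by (rule crown_levels_below)
  then show ?thesis
    using assms by (rule crown_levels.upper_pair_above)
qed

lemma upper_not_above_all:
  assumes "z \<in> level (Suc j)"
  obtains x where "x \<in> level j" "(x, z) \<notin> r"
proof -
  obtain f where "crown_levels P r j f"
    using assms by (rule crown_levels_below)
  then show ?thesis
    using assms that by (rule crown_levels.upper_not_above_all)
qed

lemma below_two_levels_up:
  assumes "u \<in> level j" "y \<in> level (Suc (Suc j))"
  shows "(u, y) \<in> r"
proof -
  have "card (level (Suc j)) = 3"
    using assms(2) rank_le by (intro card_level) (fastforce simp: mem_level_iff)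
  then obtain z1 z2 z3 where z: "level (Suc j) = {z1, z2, z3}" "z1 \<noteq> z2" "z2 \<noteq> z3" "z1 \<noteq> z3"
    by (auto simp: card_3_iff)
  have "(u, z1) \<in> r \<or> (u, z2) \<in> r" "(u, z1) \<in> r \<or> (u, z3) \<in> r" "(u, z2) \<in> r \<or> (u, z3) \<in> r"
    using upper_pair_above[OF assms(1)] z by auto
  moreover have "(z1, y) \<in> r \<or> (z2, y) \<in> r" "(z1, y) \<in> r \<or> (z3, y) \<in> r" "(z2, y) \<in> r \<or> (z3, y) \<in> r"
    using lower_pair_below[OF _ _ _ assms(2)] z by auto
  ultimately show ?thesis
    using r_trans by blast
qed

lemma below_if_rank_gap:
  assumes "u \<in> P" "y \<in> P" "rank P r u + 2 \<le> rank P r y"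
  shows "(u, y) \<in> r"
proof -
  obtain d where "rank P r y = Suc (Suc (rank P r u)) + d"
    using assms(3) by (metis add_2_eq_Suc' add.commute le_Suc_ex)
  with assms(2) show ?thesis
  proof (induction d arbitrary: y)
    case 0
    then show ?case
      using below_two_levels_up assms(1) by (simp add: mem_level_iff)
  next
    case (Suc d)
    then obtain w where "w \<in> P" "less_in r w y" "rank P r w = Suc (Suc (rank P r u)) + d"
      by (metis add_Suc_right rank_Suc_obtain_below)
    then show ?case
      using Suc.IH r_trans by (auto simp: less_in_def)
  qed
qed

lemma antichain_not_consecutive_ranks:
  assumes "u \<in> P" "v \<in> P" "w \<in> P" "distinct [u, v, w]" "antichain r {u, v, w}"
    and "rank P r w = Suc (rank P r u)"
  shows False
proof -
  have incomparable: "(u, v) \<notin> r" "(v, w) \<notin> r" "(w, v) \<notin> r" "(u, w) \<notin> r" "(v, u) \<notin> r"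
    using assms(4,5) by (auto simp: antichain_def)
  then have "\<not> rank P r u + 2 \<le> rank P r v" "\<not> rank P r v + 2 \<le> rank P r w"
    using below_if_rank_gap assms(1-3) by blast+
  then consider "rank P r v = rank P r u" | "rank P r v = Suc (rank P r u)"
    using assms(6) by linarith
  then show False
  proof cases
    case 1
    then show False
      using lower_pair_below[of u "rank P r u" v w] assms incomparable by (simp add: mem_level_iff)
  next
    case 2
    then show False
      using upper_pair_above[of u "rank P r u" w v] assms incomparable by (auto simp: mem_level_iff)
  qed
qed

lemma antichain_same_rank:
  assumes "y \<in> P" "a \<in> P" "b \<in> P" "distinct [y, a, b]" "antichain r {y, a, b}"
  shows "rank P r a = rank P r y"
proof -
  have "(y, a) \<notin> r" "(a, y) \<notin> r"
    using assms(4,5) by (auto simp: antichain_def)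
  then have "\<not> rank P r y + 2 \<le> rank P r a" "\<not> rank P r a + 2 \<le> rank P r y"
    using below_if_rank_gap assms(1,2) by blast+
  moreover have "rank P r a \<noteq> Suc (rank P r y)"
    using antichain_not_consecutive_ranks[of y b a] assms by (auto simp: insert_commute)
  moreover have "rank P r y \<noteq> Suc (rank P r a)"
    using antichain_not_consecutive_ranks[of a b y] assms by (auto simp: insert_commute)
  ultimately show ?thesis
    by linarith
qed

lemma antichain_card3_eq_level:
  assumes "A \<subseteq> P" "antichain r A" "card A = 3" "y \<in> A"
  shows "A = level (rank P r y)"
proof (rule card_seteq)
  show "finite (level (rank P r y))"
    by (rule finite_level)
  show "A \<subseteq> level (rank P r y)"
  proof
    fix a
    assume a: "a \<in> A"
    show "a \<in> level (rank P r y)"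
    proof (cases "a = y")
      case False
      have "card {y, a} < card A"
        using assms(3) by (simp add: card_insert_if)
      then obtain b where b: "b \<in> A" "b \<notin> {y, a}"
        by (metis card_mono finite.emptyI finite.insertI subsetI not_le)
      then have "rank P r a = rank P r y"
        using antichain_same_rank[of y a b] antichain_subset[OF assms(2)] assms(1,4) a False by auto
      then show ?thesis
        using a assms(1) by (auto simp: mem_level_iff)
    qed (use assms in \<open>auto simp: mem_level_iff\<close>)
  qed
  show "card (level (rank P r y)) \<le> card A"
    using assms card_level rank_le by auto
qed

lemma lower_level_incomparable_pair:
  assumes "y \<in> level (Suc i)"
  obtains x x' where "x \<in> level i" "x' \<in> level i" "distinct [y, x, x']"
    "antichain r {y, x}" "antichain r {x, x'}"
proof -
  obtain x where x: "x \<in> level i" "(x, y) \<notin> r"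
    using upper_not_above_all[OF assms] .
  have "card (level i) = 3"
    using assms rank_le by (intro card_level) (fastforce simp: mem_level_iff)
  then obtain x' where x': "x' \<in> level i" "x' \<noteq> x"
    by (force simp: card_3_iff)
  have "distinct [y, x, x']"
    using x(1) x' assms by (auto simp: mem_level_iff)
  moreover have "antichain r {y, x}"
    using x assms le_rank_le_imp_eq by (auto simp: antichain_def mem_level_iff)
  moreover have "antichain r {x, x'}"
    using x(1) x'(1) by (intro antichain_subset[OF antichain_level]) auto
  ultimately show ?thesis
    using that x(1) x'(1) by blast
qed

end

lemma card_ne_2_if_three_distinct:
  assumes "{a, b, c} \<subseteq> A" "distinct [a, b, c]"
  shows "card A \<noteq> 2"
proof
  assume two: "card A = 2"
  then have "finite A"
    by (simp add: card_ge_0_finite)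
  then have "3 \<le> card A"
    using card_mono[OF _ assms(1)] assms(2) by simp
  with two show False
    by simp
qed

lemma antichain_iso_preimage:
  assumes "bij_betw g Q C" "\<And>a b. a \<in> Q \<Longrightarrow> b \<in> Q \<Longrightarrow> (a, b) \<in> s \<longleftrightarrow> (g a, g b) \<in> t"
    and "B \<subseteq> C" "antichain t B"
  shows "antichain s {a \<in> Q. g a \<in> B}" "card {a \<in> Q. g a \<in> B} = card B"
proof -
  have inj: "inj_on g Q"
    using assms(1) by (simp add: bij_betw_def)
  then show "antichain s {a \<in> Q. g a \<in> B}"
    using assms(2,4) by (auto simp: antichain_def inj_on_def)
  have "g ` {a \<in> Q. g a \<in> B} = B"
    using assms(1,3) by (auto simp: bij_betw_def)
  moreover have "inj_on g {a \<in> Q. g a \<in> B}"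
    using inj by (rule inj_on_subset) blast
  ultimately show "card {a \<in> Q. g a \<in> B} = card B"
    using card_image by metis
qed

lemma mem_osum_carrier: "u \<in> osum_carrier L \<longleftrightarrow> fst u < length L \<and> snd u \<in> fst (L ! fst u)"
  by (cases u) (simp add: osum_carrier_def)

lemma osum_incomparable_same_index:
  assumes "u \<in> osum_carrier L" "v \<in> osum_carrier L" "(u, v) \<notin> osum_rel L" "(v, u) \<notin> osum_rel L"
  shows "fst u = fst v"
  using assms by (cases u, cases v) (auto simp: osum_rel_def)

lemma section_row_antichain:
  assumes "is_section A s" "card A \<noteq> 2" "p \<in> A"
  shows "p \<in> {0..2} \<times> {snd p}" "{0..2} \<times> {snd p} \<subseteq> A" "antichain s ({0..2} \<times> {snd p})"
proof -
  obtain N where N: "A = {0..2} \<times> {0..N}"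
    and row: "\<forall>k\<le>N. \<forall>i\<le>2. \<forall>j\<le>2. i \<noteq> j \<longrightarrow> ((i, k), (j, k)) \<notin> s"
    using assms(1,2) unfolding is_section_def by (elim conjE disjE exE) auto
  then show "p \<in> {0..2} \<times> {snd p}" "{0..2} \<times> {snd p} \<subseteq> A"
    using assms(3) by auto
  have "snd p \<le> N"
    using assms(3) N by auto
  then show "antichain s ({0..2} \<times> {snd p})"
    using row by (force simp: antichain_def)
qed

lemma osum_row_antichain:
  assumes "\<forall>S\<in>set L. is_section (fst S) (snd S)" "u \<in> osum_carrier L" "card (fst (L ! fst u)) \<noteq> 2"
  obtains B where "B \<subseteq> osum_carrier L" "u \<in> B" "card B = 3" "antichain (osum_rel L) B"
proof -
  obtain m p where u: "u = (m, p)" "m < length L" "p \<in> fst (L ! m)"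
    using assms(2) by (auto simp: osum_carrier_def)
  let ?R = "{0..2::nat} \<times> {snd p}"
  have "is_section (fst (L ! m)) (snd (L ! m))"
    using assms(1) u(2) by simp
  then have row: "p \<in> ?R" "?R \<subseteq> fst (L ! m)" "antichain (snd (L ! m)) ?R"
    using section_row_antichain assms(3) u by auto
  have "Pair m ` ?R \<subseteq> osum_carrier L"
    using row(2) u(2) by (auto simp: osum_carrier_def)
  moreover have "antichain (osum_rel L) (Pair m ` ?R)"
    using row(3) by (auto simp: antichain_def osum_rel_def)
  moreover have "card (Pair m ` ?R) = 3"
    by (simp add: card_image inj_on_def card_cartesian_product)
  ultimately show ?thesis
    using that u row(1) by blast
qed

lemma tower_3_antichain_through:
  assumes "iso_tower_of_sections Q s" "y \<in> Q" "x \<in> Q" "x' \<in> Q" "distinct [y, x, x']"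
    and "antichain s {y, x}" "antichain s {x, x'}"
  obtains A where "A \<subseteq> Q" "y \<in> A" "card A = 3" "antichain s A"
proof -
  obtain L g where L: "\<forall>S\<in>set L. is_section (fst S) (snd S)"
    and g: "bij_betw g Q (osum_carrier L)"
    and g_iff: "\<forall>a\<in>Q. \<forall>b\<in>Q. (a, b) \<in> s \<longleftrightarrow> (g a, g b) \<in> osum_rel L"
    using assms(1) unfolding iso_tower_of_sections_def poset_iso_def by blast
  have carrier: "g z \<in> osum_carrier L" if "z \<in> Q" for z
    using g that by (auto simp: bij_betw_def)
  have "(g y, g x) \<notin> osum_rel L" "(g x, g y) \<notin> osum_rel L"
    "(g x', g x) \<notin> osum_rel L" "(g x, g x') \<notin> osum_rel L"
    using g_iff assms(2-7) by (auto simp: antichain_def)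
  then have "fst (g x) = fst (g y)" "fst (g x') = fst (g x)"
    using osum_incomparable_same_index[OF carrier[OF assms(3)] carrier[OF assms(2)]]
      osum_incomparable_same_index[OF carrier[OF assms(4)] carrier[OF assms(3)]] by blast+
  then have "fst (g x) = fst (g y)" "fst (g x') = fst (g y)"
    by simp_all
  then have sub: "{snd (g y), snd (g x), snd (g x')} \<subseteq> fst (L ! fst (g y))"
    using carrier[OF assms(2)] carrier[OF assms(3)] carrier[OF assms(4)] by (auto simp: mem_osum_carrier)
  have same_snd: "a = b" if "a \<in> Q" "b \<in> Q" "fst (g a) = fst (g b)" "snd (g a) = snd (g b)" for a b
    using g inj_onD[of g Q] prod_eqI[OF that(3,4)] that(1,2) by (auto simp: bij_betw_def)
  then have "distinct [snd (g y), snd (g x), snd (g x')]"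
    using \<open>fst (g x) = fst (g y)\<close> \<open>fst (g x') = fst (g y)\<close> assms(2-5) by auto
  then have "card (fst (L ! fst (g y))) \<noteq> 2"
    by (rule card_ne_2_if_three_distinct[OF sub])
  then obtain B where B: "B \<subseteq> osum_carrier L" "g y \<in> B" "card B = 3" "antichain (osum_rel L) B"
    by (rule osum_row_antichain[OF L carrier[OF assms(2)]])
  have "antichain s {a \<in> Q. g a \<in> B}" "card {a \<in> Q. g a \<in> B} = 3"
    using antichain_iso_preimage[OF g _ B(1) B(4)] g_iff B(3) by auto
  moreover have "y \<in> {a \<in> Q. g a \<in> B}"
    using assms(2) B(2) by simp
  ultimately show ?thesis
    using that[of "{a \<in> Q. g a \<in> B}"] by blast
qed

theorem lemma5p2:
  fixes P Q :: "'a set" and r :: "('a \<times> 'a) set" and i :: nat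
  assumes "six_stack P r"
    and "Q \<subseteq> P"
    and "iso_tower_of_sections Q (induced r Q)"
    and "levels P r i i \<subseteq> Q"
    and "\<not> levels P r (i+1) (i+1) \<subseteq> Q"
  shows "levels P r (i+1) (i+1) \<inter> Q = {}"
proof (rule ccontr)
  obtain n where "six_stack_poset P r n"
    using assms(1) by (auto simp: six_stack_def six_stack_poset_def six_stack_poset_axioms_def finite_poset_def)
  then interpret six_stack_poset P r n .
  assume "levels P r (i+1) (i+1) \<inter> Q \<noteq> {}"
  then obtain y where y: "y \<in> level (Suc i)" "y \<in> Q"
    by auto
  obtain x x' where x: "x \<in> level i" "x' \<in> level i" "distinct [y, x, x']"
    and antichains: "antichain r {y, x}" "antichain r {x, x'}"
    using lower_level_incomparable_pair[OF y(1)] .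
  have "x \<in> Q" "x' \<in> Q"
    using x assms(4) by auto
  then have "antichain (induced r Q) {y, x}" "antichain (induced r Q) {x, x'}"
    using antichains antichain_induced[of "{y, x}" Q r] antichain_induced[of "{x, x'}" Q r] y(2) by auto
  then obtain A where A: "A \<subseteq> Q" "y \<in> A" "card A = 3" "antichain (induced r Q) A"
    using tower_3_antichain_through[OF assms(3) y(2) \<open>x \<in> Q\<close> \<open>x' \<in> Q\<close> x(3)] by blast
  then have "A = level (rank P r y)"
    using antichain_induced[of A Q r] assms(2) by (intro antichain_card3_eq_level) auto
  then show False
    using A(1) assms(5) y(1) by (simp add: mem_level_iff)
qed

end
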